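(* Let $K$ be a positive integer, let $p$ be a prime number, and let $\varepsilon$ and $\kappa$ be positive real numbers with $\kappa<1$. For $k=1,\ldots,K$, let $\{a_{k,n}\}_{n=1}^\infty$ and $\{b_{k,n}\}_{n=1}^\infty$ be sequences of non-zero integers with $p\nmid\gcd(a_{k,n},b_{k,n})$, and set $a_{0,n}=1$ for all $n$. Suppose that for each $k=1,\ldots,K$: for each sufficiently large $N$ there is exactly one $n\le N$ with $\nu_p(a_{k,n})=\max_{1\le m\le N}\nu_p(a_{k,m})$, and \[\lim_{N\to\infty}\frac{\max_{1\le n\le N}\nu_p(a_{k,n})}{1+\max_{1\le n\le N}\nu_p(a_{k-1,n})}=\infty.\] Suppose there is a non-decreasing sequence $\{a_n\}_{n=1}^\infty$ of positive integers and an integer $A_0$ such that for each $k=1,\ldots,K$, each integer $A\ge A_0$ and all sufficiently large $n$: \[ n^{1+\varepsilon}\le a_n\le a_{n+1},\qquad |b_{k,n}|\le 2^{(\log_2 a_n)^\kappa},\] \[ a_n2^{-(\log_2 a_n)^\kappa}\le |a_{k,n}|\le \max\big\{a_n2^{(\log_2 a_n)^\kappa},\,2^{A^n}\big\},\] and for each integer $A\ge A_0$, $\limsup_{n\to\infty}a_n^{1/A^n}=\infty$. For $k=1,\ldots,K$ set $\alpha_k=\sum_{n=1}^\infty\frac{b_{k,n}}{a_{k,n}}$. Then $\alpha_1,\ldots,\alpha_K$ are algebraically independent over $\mathbb Q$.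
   Context: For a prime $p$ and integer $n$, $\nu_p(n)$ denotes the $p$-adic valuation of $n$ (with $\nu_p(0)=\infty$). *)

theory Defs
  imports Complex_Main "HOL-Library.Extended_Real" "HOL-Computational_Algebra.Primes"
begin

text \<open>Algebraic independence over the rationals of the reals alpha 1, ..., alpha K:
  a multivariate polynomial with rational coefficients in K variables is represented by a finite
  set S of exponent vectors (functions nat to nat, supported on 1..K) and coefficients c.\<close>
definition alg_indep_over_Q :: "nat \<Rightarrow> (nat \<Rightarrow> real) \<Rightarrow> bool" where
  "alg_indep_over_Q K \<alpha> \<longleftrightarrow>
     (\<forall>(S :: (nat \<Rightarrow> nat) set) (c :: (nat \<Rightarrow> nat) \<Rightarrow> rat).
        finite S \<and> (\<forall>e\<in>S. \<forall>i. i \<notin> {1..K} \<longrightarrow> e i = 0) \<and>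
        (\<Sum>e\<in>S. of_rat (c e) * (\<Prod>k\<in>{1..K}. \<alpha> k ^ e k)) = 0
        \<longrightarrow> (\<forall>e\<in>S. c e = 0))"

definition maxval :: "nat \<Rightarrow> (nat \<Rightarrow> int) \<Rightarrow> nat \<Rightarrow> nat" where
  "maxval p a N = Max ((\<lambda>m. multiplicity (int p) (a m)) ` {1..N})"

end

theory Submission
  imports Defs "HOL-Analysis.Summation_Tests" "HOL-Real_Asymp.Real_Asymp"
begin

text \<open>
  Suppose a nonzero integer polynomial P, of degree at most E in each variable, vanished at
  (alpha_1, ..., alpha_K). Write the N-th partial sum of alpha_k as T_k / D_k with
  D_k = a_{k,1} ... a_{k,N}; then Q_N = D^E P(T_1/D_1, ..., T_K/D_K), where D = D_1 ... D_K,
  is an integer.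

  p-adically: if a_{k,n} is the unique term of maximal valuation M_k among a_{k,1}, ..., a_{k,N},
  then nu_p(D_k) - nu_p(T_k) = M_k. As M_k eventually exceeds any fixed multiple of M_{k-1}, the
  monomials of P get valuations that differ by more than the valuations of the coefficients, so
  one monomial dominates and Q_N is nonzero for all large N.

  In absolute value, |Q_N| is at most D^E times a Lipschitz constant of P times the tails of the
  series. Write s for the sequence a_n of the statement and take N + 1 to be a record index of
  ln s_n / A^n for a large A. Then the upper bounds on |a_{k,n}| give
  D^E <= const * s_{N+1}^(theta/2), while the tails are O(s_{N+1}^(-theta)). Hence |Q_N| < 1
  for infinitely many N, a contradiction.
\<close>

section \<open>Polynomials with cleared denominators\<close>

definition eval_mpoly :: "nat \<Rightarrow> (nat \<Rightarrow> nat) set \<Rightarrow> ((nat \<Rightarrow> nat) \<Rightarrow> real) \<Rightarrow> (nat \<Rightarrow> real) \<Rightarrow> real" where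
  "eval_mpoly K S c x = (\<Sum>e\<in>S. c e * (\<Prod>k\<in>{1..K}. x k ^ e k))"

definition cleared_eval ::
    "nat \<Rightarrow> nat \<Rightarrow> (nat \<Rightarrow> nat) set \<Rightarrow> ((nat \<Rightarrow> nat) \<Rightarrow> int) \<Rightarrow> (nat \<Rightarrow> int) \<Rightarrow> (nat \<Rightarrow> int) \<Rightarrow> int" where
  "cleared_eval K E S C T D = (\<Sum>e\<in>S. C e * (\<Prod>k\<in>{1..K}. T k ^ e k * D k ^ (E - e k)))"

lemma of_int_cleared_eval:
  assumes TD: "\<forall>k\<in>{1..K}. real_of_int (T k) = real_of_int (D k) * x k"
    and E: "\<forall>e\<in>S. \<forall>k\<in>{1..K}. e k \<le> E"
  shows "real_of_int (cleared_eval K E S C T D) =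
    (\<Prod>k\<in>{1..K}. real_of_int (D k)) ^ E * eval_mpoly K S (\<lambda>e. real_of_int (C e)) x"
proof -
  have "real_of_int (\<Prod>k\<in>{1..K}. T k ^ e k * D k ^ (E - e k)) =
      (\<Prod>k\<in>{1..K}. real_of_int (D k)) ^ E * (\<Prod>k\<in>{1..K}. x k ^ e k)" if e: "e \<in> S" for e
  proof -
    have "real_of_int (T k ^ e k * D k ^ (E - e k)) = real_of_int (D k) ^ E * x k ^ e k"
      if k: "k \<in> {1..K}" for k
    proof -
      have "real_of_int (T k ^ e k * D k ^ (E - e k)) = real_of_int (D k) ^ (e k + (E - e k)) * x k ^ e k"
        using TD k by (simp add: power_mult_distrib power_add)
      with E e k show ?thesis
        by simp
    qed
    then have "real_of_int (\<Prod>k\<in>{1..K}. T k ^ e k * D k ^ (E - e k)) =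
        (\<Prod>k\<in>{1..K}. real_of_int (D k) ^ E * x k ^ e k)"
      unfolding of_int_prod by (intro prod.cong) auto
    then show ?thesis
      by (simp add: prod.distrib prod_power_distrib)
  qed
  then show ?thesis
    unfolding cleared_eval_def eval_mpoly_def of_int_sum of_int_mult sum_distrib_left
    by (intro sum.cong) (simp_all add: algebra_simps)
qed

lemma eval_mpoly_int_root_of_rat_root:
  fixes c :: "(nat \<Rightarrow> nat) \<Rightarrow> rat"
  assumes S: "finite S" and root: "eval_mpoly K S (\<lambda>e. of_rat (c e)) x = 0"
    and "e0 \<in> S" "c e0 \<noteq> 0"
  obtains S' C where "finite S'" "S' \<subseteq> S" "S' \<noteq> {}" "\<forall>e\<in>S'. C e \<noteq> (0 :: int)"
    "eval_mpoly K S' (\<lambda>e. of_int (C e)) x = 0"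
proof
  define S' where "S' = {e\<in>S. c e \<noteq> 0}"
  define num where "num e = fst (quotient_of (c e))" for e
  define den where "den e = snd (quotient_of (c e))" for e
  define C where "C e = num e * (\<Prod>e'\<in>S' - {e}. den e')" for e
  have den_pos: "den e > 0" for e
    unfolding den_def by (rule quotient_of_denom_pos')
  have c_eq: "c e = of_int (num e) / of_int (den e)" for e
    unfolding num_def den_def by (rule quotient_of_div) simp
  have C_eq: "real_of_int (C e) = real_of_int (\<Prod>e'\<in>S'. den e') * of_rat (c e)" if "e \<in> S'" for e
  proof -
    have "(\<Prod>e'\<in>S'. den e') = den e * (\<Prod>e'\<in>S' - {e}. den e')"
      using that S unfolding S'_def by (simp add: prod.remove)
    then show ?thesis
      using den_pos[of e] by (simp add: C_def c_eq of_rat_divide)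
  qed
  show "finite S'" "S' \<subseteq> S" "S' \<noteq> {}"
    using S \<open>e0 \<in> S\<close> \<open>c e0 \<noteq> 0\<close> unfolding S'_def by auto
  have "real_of_int (\<Prod>e'\<in>S'. den e') > 0"
    unfolding of_int_0_less_iff using den_pos by (intro prod_pos) auto
  then show "\<forall>e\<in>S'. C e \<noteq> 0"
  proof (intro ballI notI)
    fix e assume "e \<in> S'" "C e = 0"
    with C_eq[of e] \<open>real_of_int (\<Prod>e'\<in>S'. den e') > 0\<close> show False
      by (simp add: S'_def)
  qed
  have "eval_mpoly K S (\<lambda>e. of_rat (c e)) x = eval_mpoly K S' (\<lambda>e. of_rat (c e)) x"
    unfolding eval_mpoly_def S'_def using S by (intro sum.mono_neutral_right) auto
  then show "eval_mpoly K S' (\<lambda>e. of_int (C e)) x = 0"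
    using root C_eq by (simp add: eval_mpoly_def mult.assoc flip: sum_distrib_left cong: sum.cong)
qed

lemma exponents_bounded:
  fixes S :: "(nat \<Rightarrow> nat) set"
  assumes "finite S"
  shows "\<exists>E. \<forall>e\<in>S. \<forall>k\<in>{1..K}. e k \<le> (E :: nat)"
proof (intro exI ballI)
  fix e k assume "e \<in> S" "k \<in> {1..K}"
  then show "e k \<le> (\<Sum>e\<in>S. \<Sum>k\<in>{1..K}. e k)"
    using assms by (intro order_trans[OF _ member_le_sum[of e]] member_le_sum) auto
qed

lemma abs_prod_diff_le:
  fixes f g :: "'i \<Rightarrow> real"
  assumes "finite I" "B \<ge> 1" "\<forall>i\<in>I. \<bar>f i\<bar> \<le> B \<and> \<bar>g i\<bar> \<le> B"
  shows "\<bar>(\<Prod>i\<in>I. f i) - (\<Prod>i\<in>I. g i)\<bar> \<le> B ^ card I * (\<Sum>i\<in>I. \<bar>f i - g i\<bar>)"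
  using assms
proof (induction I rule: finite_induct)
  case empty
  then show ?case by simp
next
  case (insert x F)
  have IH: "\<bar>(\<Prod>i\<in>F. f i) - (\<Prod>i\<in>F. g i)\<bar> \<le> B ^ card F * (\<Sum>i\<in>F. \<bar>f i - g i\<bar>)"
    using insert by auto
  have fx: "\<bar>f x\<bar> \<le> B" "\<bar>g x\<bar> \<le> B" using insert by auto
  have gF: "\<bar>\<Prod>i\<in>F. g i\<bar> \<le> B ^ card F"
    unfolding abs_prod using insert
    by (metis (no_types, lifting) abs_ge_zero insert_iff prod_constant prod_mono)
  have Bp: "B ^ card F \<le> B ^ Suc (card F)" by (rule power_increasing) (use insert.prems(1) in auto)
  have "(\<Prod>i\<in>insert x F. f i) - (\<Prod>i\<in>insert x F. g i) =
        f x * ((\<Prod>i\<in>F. f i) - (\<Prod>i\<in>F. g i)) + (f x - g x) * (\<Prod>i\<in>F. g i)"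
    using insert by (simp add: algebra_simps)
  also have "\<bar>\<dots>\<bar> \<le> \<bar>f x\<bar> * \<bar>(\<Prod>i\<in>F. f i) - (\<Prod>i\<in>F. g i)\<bar> + \<bar>f x - g x\<bar> * \<bar>\<Prod>i\<in>F. g i\<bar>"
    by (metis abs_mult abs_triangle_ineq)
  also have "\<dots> \<le> B * (B ^ card F * (\<Sum>i\<in>F. \<bar>f i - g i\<bar>)) + \<bar>f x - g x\<bar> * B ^ card F"
    using insert.prems(1) by (intro add_mono mult_mono IH fx gF) auto
  also have "\<dots> \<le> B ^ Suc (card F) * (\<Sum>i\<in>F. \<bar>f i - g i\<bar>) + \<bar>f x - g x\<bar> * B ^ Suc (card F)"
    using Bp by (intro add_mono mult_left_mono) (auto simp: mult.assoc)
  also have "\<dots> = B ^ card (insert x F) * (\<Sum>i\<in>insert x F. \<bar>f i - g i\<bar>)"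
    using insert by (simp add: algebra_simps)
  finally show ?case .
qed

lemma abs_monomial_diff_le:
  fixes x y :: "nat \<Rightarrow> real" and e :: "nat \<Rightarrow> nat"
  assumes B: "B \<ge> 1" and xy: "\<forall>k\<in>{1..K}. \<bar>x k\<bar> \<le> B \<and> \<bar>y k\<bar> \<le> B"
    and e: "\<forall>k\<in>{1..K}. e k \<le> E" and \<delta>: "\<forall>k\<in>{1..K}. \<bar>x k - y k\<bar> \<le> \<delta>"
  shows "\<bar>(\<Prod>k\<in>{1..K}. x k ^ e k) - (\<Prod>k\<in>{1..K}. y k ^ e k)\<bar> \<le> B ^ (E * K) * (K * (B ^ E * (E * \<delta>)))"
proof -
  have power_le: "\<bar>z ^ e k\<bar> \<le> B ^ E" if "\<bar>z\<bar> \<le> B" "k \<in> {1..K}" for z k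
  proof -
    have "\<bar>z ^ e k\<bar> \<le> B ^ e k"
      unfolding power_abs using that by (intro power_mono) auto
    also have "\<dots> \<le> B ^ E"
      using B e that by (intro power_increasing) auto
    finally show ?thesis .
  qed
  have power_diff: "\<bar>x k ^ e k - y k ^ e k\<bar> \<le> B ^ E * (E * \<delta>)" if k: "k \<in> {1..K}" for k
  proof -
    have "\<bar>x k ^ e k - y k ^ e k\<bar> \<le> B ^ e k * (e k * \<bar>x k - y k\<bar>)"
      using abs_prod_diff_le[of "{..<e k}" B "\<lambda>_. x k" "\<lambda>_. y k"] B xy k by simp
    also have "\<dots> \<le> B ^ E * (E * \<delta>)"
      using B e \<delta> k by (intro mult_mono power_increasing) (auto intro!: mult_mono)
    finally show ?thesis .
  qed
  have "\<bar>(\<Prod>k\<in>{1..K}. x k ^ e k) - (\<Prod>k\<in>{1..K}. y k ^ e k)\<bar>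
      \<le> (B ^ E) ^ card {1..K} * (\<Sum>k\<in>{1..K}. \<bar>x k ^ e k - y k ^ e k\<bar>)"
    using B xy power_le by (intro abs_prod_diff_le) auto
  also have "\<dots> \<le> B ^ (E * K) * (\<Sum>k\<in>{1..K}. B ^ E * (E * \<delta>))"
    using B power_diff by (intro mult_mono sum_mono sum_nonneg) (auto simp: power_mult)
  finally show ?thesis
    by simp
qed

lemma abs_eval_mpoly_diff_le:
  fixes x y :: "nat \<Rightarrow> real"
  assumes B: "B \<ge> 1" and xy: "\<forall>k\<in>{1..K}. \<bar>x k\<bar> \<le> B \<and> \<bar>y k\<bar> \<le> B"
    and E: "\<forall>e\<in>S. \<forall>k\<in>{1..K}. e k \<le> E" and \<delta>: "\<forall>k\<in>{1..K}. \<bar>x k - y k\<bar> \<le> \<delta>"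
  shows "\<bar>eval_mpoly K S c x - eval_mpoly K S c y\<bar>
    \<le> (\<Sum>e\<in>S. \<bar>c e\<bar>) * (B ^ (E * K) * (K * (B ^ E * E))) * \<delta>"
proof -
  have "\<bar>eval_mpoly K S c x - eval_mpoly K S c y\<bar> =
      \<bar>\<Sum>e\<in>S. c e * ((\<Prod>k\<in>{1..K}. x k ^ e k) - (\<Prod>k\<in>{1..K}. y k ^ e k))\<bar>"
    unfolding eval_mpoly_def by (simp add: sum_subtractf algebra_simps)
  also have "\<dots> \<le> (\<Sum>e\<in>S. \<bar>c e\<bar> * \<bar>(\<Prod>k\<in>{1..K}. x k ^ e k) - (\<Prod>k\<in>{1..K}. y k ^ e k)\<bar>)"
    by (rule order_trans[OF sum_abs]) (simp add: abs_mult)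
  also have "\<dots> \<le> (\<Sum>e\<in>S. \<bar>c e\<bar> * (B ^ (E * K) * (K * (B ^ E * (E * \<delta>)))))"
    using abs_monomial_diff_le[OF B xy _ \<delta>] E by (intro sum_mono mult_left_mono) auto
  also have "\<dots> = (\<Sum>e\<in>S. \<bar>c e\<bar>) * (B ^ (E * K) * (K * (B ^ E * E))) * \<delta>"
    by (simp add: sum_distrib_right mult.assoc)
  finally show ?thesis .
qed

section \<open>p-adic valuations\<close>

lemma multiplicity_sum_unique_min:
  fixes f :: "'i \<Rightarrow> 'a :: {factorial_semiring, comm_ring_1}"
  assumes q: "\<not> is_unit q" and I: "finite I" "i0 \<in> I" and nz: "\<forall>i\<in>I. f i \<noteq> 0"
    and min: "\<forall>i\<in>I - {i0}. multiplicity q (f i0) < multiplicity q (f i)"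
  shows "(\<Sum>i\<in>I. f i) \<noteq> 0 \<and> multiplicity q (\<Sum>i\<in>I. f i) = multiplicity q (f i0)"
proof -
  define v where "v = multiplicity q (f i0)"
  have "q ^ Suc v dvd (\<Sum>i\<in>I - {i0}. f i)"
    using min by (intro dvd_sum multiplicity_dvd') (simp add: v_def Suc_le_eq)
  moreover have "\<not> q ^ Suc v dvd f i0"
    using power_dvd_iff_le_multiplicity[of "f i0" q "Suc v"] q I nz by (simp add: v_def)
  ultimately have "\<not> q ^ Suc v dvd (\<Sum>i\<in>I. f i)"
    using I by (simp add: sum.remove dvd_add_left_iff)
  moreover have "v \<le> multiplicity q (f i)" if "i \<in> I" for i
    using min[rule_format, of i] that by (cases "i = i0") (auto simp: v_def)
  then have "q ^ v dvd (\<Sum>i\<in>I. f i)"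
    by (intro dvd_sum multiplicity_dvd')
  ultimately show ?thesis
    by (auto intro: multiplicity_eqI simp: v_def)
qed

lemma multiplicity_prod_remove:
  assumes "prime_elem q" "finite I" "n \<in> I" "\<forall>m\<in>I. a m \<noteq> 0"
  shows "multiplicity q (\<Prod>m\<in>I - {n}. a m) + multiplicity q (a n) = multiplicity q (\<Prod>m\<in>I. a m)"
  using assms by (simp add: prod.remove prime_elem_multiplicity_mult_distrib)

definition partial_numer :: "(nat \<Rightarrow> int) \<Rightarrow> (nat \<Rightarrow> int) \<Rightarrow> nat \<Rightarrow> int" where
  "partial_numer a b N = (\<Sum>n\<in>{1..N}. b n * (\<Prod>m\<in>{1..N} - {n}. a m))"

definition partial_denom :: "(nat \<Rightarrow> int) \<Rightarrow> nat \<Rightarrow> int" where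
  "partial_denom a N = (\<Prod>n\<in>{1..N}. a n)"

lemma of_int_partial_numer:
  assumes "\<forall>n\<in>{1..N}. a n \<noteq> 0"
  shows "real_of_int (partial_numer a b N) =
    real_of_int (partial_denom a N) * (\<Sum>n<N. real_of_int (b (Suc n)) / real_of_int (a (Suc n)))"
proof -
  have "real_of_int (b n * (\<Prod>m\<in>{1..N} - {n}. a m)) =
      real_of_int (partial_denom a N) * (real_of_int (b n) / real_of_int (a n))" if "n \<in> {1..N}" for n
    using assms that by (simp add: partial_denom_def prod.remove)
  then have "real_of_int (partial_numer a b N) =
      real_of_int (partial_denom a N) * (\<Sum>n\<in>{1..N}. real_of_int (b n) / real_of_int (a n))"
    unfolding partial_numer_def of_int_sum sum_distrib_left by (intro sum.cong) auto
  then show ?thesis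
    by (simp add: sum.atLeast1_atMost_eq)
qed

lemma multiplicity_partial_numer:
  assumes q: "prime_elem q" and ns: "ns \<in> {1..N}" and nz: "\<forall>n\<in>{1..N}. a n \<noteq> 0 \<and> b n \<noteq> 0"
    and max: "\<forall>n\<in>{1..N} - {ns}. multiplicity q (a n) < multiplicity q (a ns)"
    and b_ns: "\<not> q dvd b ns"
  shows "partial_numer a b N \<noteq> 0 \<and>
    multiplicity q (partial_numer a b N) + multiplicity q (a ns) = multiplicity q (partial_denom a N)"
proof -
  let ?summand = "\<lambda>n. b n * (\<Prod>m\<in>{1..N} - {n}. a m)"
  let ?v = "\<lambda>n. multiplicity q (\<Prod>m\<in>{1..N} - {n}. a m)"
  have v: "?v n + multiplicity q (a n) = multiplicity q (partial_denom a N)" if "n \<in> {1..N}" for n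
    unfolding partial_denom_def using q that nz by (intro multiplicity_prod_remove) auto
  have summand: "?summand n \<noteq> 0 \<and> multiplicity q (?summand n) = multiplicity q (b n) + ?v n"
    if "n \<in> {1..N}" for n
    using nz that by (simp add: prime_elem_multiplicity_mult_distrib[OF q])
  have b0: "multiplicity q (b ns) = 0"
    using b_ns by (rule not_dvd_imp_multiplicity_0)
  have "multiplicity q (?summand ns) < multiplicity q (?summand n)" if n: "n \<in> {1..N} - {ns}" for n
    using summand[of n] summand[OF ns] v[of n] v[OF ns] max[rule_format, OF n] n b0 by auto
  then have "(\<Sum>n\<in>{1..N}. ?summand n) \<noteq> 0 \<and> multiplicity q (\<Sum>n\<in>{1..N}. ?summand n) = multiplicity q (?summand ns)"
    using q summand ns by (intro multiplicity_sum_unique_min prime_elem_not_unit) auto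
  then show ?thesis
    unfolding partial_numer_def using summand[OF ns] v[OF ns] b0 by simp
qed

lemma weighted_sum_gap:
  fixes e e' M :: "nat \<Rightarrow> nat"
  assumes j: "j \<in> {1..K}" and less: "e' j < e j" and above: "\<forall>k\<in>{j<..K}. e k = e' k"
    and bound: "\<forall>k\<in>{1..K}. e' k \<le> E" and M_j: "E * (\<Sum>k\<in>{1..<j}. M k) + c < M j"
  shows "(\<Sum>k\<in>{1..K}. e' k * M k) + c < (\<Sum>k\<in>{1..K}. e k * M k)"
proof -
  have split: "(\<Sum>k\<in>{1..K}. f k) = (\<Sum>k\<in>{1..<j}. f k) + f j + (\<Sum>k\<in>{j<..K}. f k)"
    for f :: "nat \<Rightarrow> nat"
  proof -
    have "{1..K} = insert j ({1..<j} \<union> {j<..K})" using j by auto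
    moreover have "sum f ({1..<j} \<union> {j<..K}) = sum f {1..<j} + sum f {j<..K}"
      by (rule sum.union_disjoint) auto
    ultimately show ?thesis by (simp add: add_ac)
  qed
  have "(\<Sum>k\<in>{1..<j}. e' k * M k) \<le> E * (\<Sum>k\<in>{1..<j}. M k)"
    unfolding sum_distrib_left using bound j by (intro sum_mono) auto
  moreover have "e' j * M j + M j \<le> e j * M j"
    using less by (metis Suc_leI mult_Suc mult_le_mono1 add.commute)
  moreover have "(\<Sum>k\<in>{j<..K}. e k * M k) = (\<Sum>k\<in>{j<..K}. e' k * M k)"
    using above by simp
  ultimately show ?thesis
    using split[of "\<lambda>k. e k * M k"] split[of "\<lambda>k. e' k * M k"] M_j by linarith
qed

lemma weighted_sums_separated:
  fixes e e' M :: "nat \<Rightarrow> nat"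
  assumes supp: "\<forall>i. i \<notin> {1..K} \<longrightarrow> e i = 0" "\<forall>i. i \<notin> {1..K} \<longrightarrow> e' i = 0" and "e \<noteq> e'"
    and bound: "\<forall>k\<in>{1..K}. e k \<le> E \<and> e' k \<le> E"
    and superincreasing: "\<forall>j\<in>{1..K}. E * (\<Sum>k\<in>{1..<j}. M k) + c < M j"
  shows "(\<Sum>k\<in>{1..K}. e k * M k) + c < (\<Sum>k\<in>{1..K}. e' k * M k) \<or>
    (\<Sum>k\<in>{1..K}. e' k * M k) + c < (\<Sum>k\<in>{1..K}. e k * M k)"
proof -
  define J where "J = {k\<in>{1..K}. e k \<noteq> e' k}"
  define j where "j = Max J"
  obtain i where "e i \<noteq> e' i"
    using \<open>e \<noteq> e'\<close> by blast
  then have "i \<in> J"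
    using supp unfolding J_def by (cases "i \<in> {1..K}") auto
  then have "j \<in> J"
    unfolding j_def J_def by (intro Max_in) auto
  then have j: "j \<in> {1..K}" and "e j \<noteq> e' j"
    unfolding J_def by auto
  have above: "\<forall>k\<in>{j<..K}. e k = e' k"
  proof (rule ballI, rule ccontr)
    fix k assume k: "k \<in> {j<..K}" and "e k \<noteq> e' k"
    then have "k \<le> j"
      unfolding j_def J_def by (intro Max_ge) auto
    with k show False by simp
  qed
  consider "e' j < e j" | "e j < e' j"
    using \<open>e j \<noteq> e' j\<close> by linarith
  then show ?thesis
  proof cases
    case 1
    then show ?thesis
      by (intro disjI2 weighted_sum_gap[where e = e and e' = e', OF j 1]) (use above bound superincreasing j in auto)
  next
    case 2
    then show ?thesis
      by (intro disjI1 weighted_sum_gap[where e = e' and e' = e, OF j 2]) (use above bound superincreasing j in auto)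
  qed
qed

lemma superincreasing_if_ratio_ge:
  fixes M :: "nat \<Rightarrow> nat"
  assumes ratio: "\<forall>k\<in>{1..K}. (E * K + c + 1) * (1 + M (k - 1)) \<le> M k"
  shows "\<forall>j\<in>{1..K}. E * (\<Sum>k\<in>{1..<j}. M k) + c < M j"
proof
  fix j assume j: "j \<in> {1..K}"
  have step: "M n \<le> M (Suc n)" if "n \<in> {0..<K}" for n
  proof -
    have "M n \<le> (E * K + c + 1) * (1 + M n)"
      by simp
    also have "\<dots> \<le> M (Suc n)"
      using ratio[rule_format, of "Suc n"] that by simp
    finally show ?thesis .
  qed
  have "M k \<le> M (j - 1)" if "k \<in> {1..<j}" for k
    using that j by (intro lift_Suc_mono_le_ivl[where N = "{0..<K}" and f = M, OF step]) auto
  then have "(\<Sum>k\<in>{1..<j}. M k) \<le> (j - 1) * M (j - 1)"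
    using sum_bounded_above[of "{1..<j}" M "M (j - 1)"] by simp
  also have "\<dots> \<le> K * M (j - 1)"
    using j by (intro mult_le_mono1) auto
  finally have "E * (\<Sum>k\<in>{1..<j}. M k) + c \<le> E * K * M (j - 1) + c"
    by (simp add: mult.assoc)
  also have "\<dots> < (E * K + c + 1) * (1 + M (j - 1))"
    by (simp add: algebra_simps)
  also have "\<dots> \<le> M j"
    using ratio j by blast
  finally show "E * (\<Sum>k\<in>{1..<j}. M k) + c < M j" .
qed

lemma multiplicity_cleared_eval_summand:
  fixes C :: "(nat \<Rightarrow> nat) \<Rightarrow> int" and T D :: "nat \<Rightarrow> int" and M :: "nat \<Rightarrow> nat"
  assumes q: "prime_elem q" and C: "C e \<noteq> 0" and e: "\<forall>k\<in>{1..K}. e k \<le> E"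
    and TD: "\<forall>k\<in>{1..K}. T k \<noteq> 0 \<and> D k \<noteq> 0 \<and> multiplicity q (T k) + M k = multiplicity q (D k)"
  shows "C e * (\<Prod>k\<in>{1..K}. T k ^ e k * D k ^ (E - e k)) \<noteq> 0 \<and>
    multiplicity q (C e * (\<Prod>k\<in>{1..K}. T k ^ e k * D k ^ (E - e k))) + (\<Sum>k\<in>{1..K}. e k * M k) =
    multiplicity q (C e) + (\<Sum>k\<in>{1..K}. E * multiplicity q (D k))"
proof -
  have factor: "multiplicity q (T k ^ e k * D k ^ (E - e k)) + e k * M k = E * multiplicity q (D k)"
    if k: "k \<in> {1..K}" for k
  proof -
    from TD k have T: "T k \<noteq> 0" and D: "D k \<noteq> 0"
      and TM: "multiplicity q (T k) + M k = multiplicity q (D k)" by auto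
    have "multiplicity q (T k ^ e k * D k ^ (E - e k)) + e k * M k =
        e k * (multiplicity q (T k) + M k) + (E - e k) * multiplicity q (D k)"
      using T D by (simp add: prime_elem_multiplicity_mult_distrib[OF q]
          prime_elem_multiplicity_power_distrib[OF q] algebra_simps)
    also have "\<dots> = (e k + (E - e k)) * multiplicity q (D k)"
      unfolding TM by (simp add: add_mult_distrib)
    also have "\<dots> = E * multiplicity q (D k)"
      using e k by simp
    finally show ?thesis .
  qed
  have nz: "(\<Prod>k\<in>{1..K}. T k ^ e k * D k ^ (E - e k)) \<noteq> 0"
    using TD by auto
  have "multiplicity q (C e * (\<Prod>k\<in>{1..K}. T k ^ e k * D k ^ (E - e k))) =
      multiplicity q (C e) + multiplicity q (\<Prod>k\<in>{1..K}. T k ^ e k * D k ^ (E - e k))"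
    using C nz by (simp add: prime_elem_multiplicity_mult_distrib[OF q])
  also have "multiplicity q (\<Prod>k\<in>{1..K}. T k ^ e k * D k ^ (E - e k)) =
      (\<Sum>k\<in>{1..K}. multiplicity q (T k ^ e k * D k ^ (E - e k)))"
    using TD by (intro prime_elem_multiplicity_prod_distrib[OF q]) auto
  finally show ?thesis
    using C nz factor by (simp add: sum.distrib[symmetric])
qed

lemma cleared_eval_nonzero:
  fixes C :: "(nat \<Rightarrow> nat) \<Rightarrow> int" and T D :: "nat \<Rightarrow> int" and M :: "nat \<Rightarrow> nat"
  assumes q: "prime_elem q" and S: "finite S" "S \<noteq> {}"
    and C: "\<forall>e\<in>S. C e \<noteq> 0 \<and> multiplicity q (C e) \<le> c"
    and TD: "\<forall>k\<in>{1..K}. T k \<noteq> 0 \<and> D k \<noteq> 0 \<and> multiplicity q (T k) + M k = multiplicity q (D k)"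
    and E: "\<forall>e\<in>S. \<forall>k\<in>{1..K}. e k \<le> E"
    and separated: "\<forall>e\<in>S. \<forall>e'\<in>S. e \<noteq> e' \<longrightarrow>
      (\<Sum>k\<in>{1..K}. e k * M k) + c < (\<Sum>k\<in>{1..K}. e' k * M k) \<or>
      (\<Sum>k\<in>{1..K}. e' k * M k) + c < (\<Sum>k\<in>{1..K}. e k * M k)"
  shows "cleared_eval K E S C T D \<noteq> 0"
proof -
  define W where "W e = (\<Sum>k\<in>{1..K}. e k * M k)" for e :: "nat \<Rightarrow> nat"
  let ?summand = "\<lambda>e. C e * (\<Prod>k\<in>{1..K}. T k ^ e k * D k ^ (E - e k))"
  have summand: "?summand e \<noteq> 0 \<and>
      multiplicity q (?summand e) + W e = multiplicity q (C e) + (\<Sum>k\<in>{1..K}. E * multiplicity q (D k))"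
    if "e \<in> S" for e
    unfolding W_def using that C E TD by (intro multiplicity_cleared_eval_summand[OF q]) auto
  obtain es where es: "es \<in> S" "\<forall>e\<in>S. W e \<le> W es"
    using S Max_in[of "W ` S"] Max_ge[of "W ` S"] by fastforce
  have "multiplicity q (?summand es) < multiplicity q (?summand e)" if e: "e \<in> S - {es}" for e
  proof -
    have "W e + c < W es"
      using separated es e unfolding W_def by fastforce
    then show ?thesis
      using summand[of e] summand[OF es(1)] C es e by fastforce
  qed
  then show ?thesis
    unfolding cleared_eval_def using summand q S es
    by (intro multiplicity_sum_unique_min[THEN conjunct1] prime_elem_not_unit) auto
qed

lemma multiplicity_partial_numer_maxval:
  assumes p: "prime p" and nz: "\<forall>n\<in>{1..N}. a n \<noteq> 0 \<and> b n \<noteq> 0"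
    and coprime: "\<forall>n\<in>{1..N}. \<not> int p dvd gcd (a n) (b n)"
    and unique: "card {n\<in>{1..N}. multiplicity (int p) (a n) = maxval p a N} = 1"
    and pos: "maxval p a N > 0"
  shows "partial_numer a b N \<noteq> 0 \<and>
    multiplicity (int p) (partial_numer a b N) + maxval p a N = multiplicity (int p) (partial_denom a N)"
proof -
  obtain ns where ns: "{n\<in>{1..N}. multiplicity (int p) (a n) = maxval p a N} = {ns}"
    using card_1_singletonE[OF unique] by blast
  then have ns_in: "ns \<in> {1..N}" and max: "multiplicity (int p) (a ns) = maxval p a N"
    by auto
  have "multiplicity (int p) (a n) < multiplicity (int p) (a ns)" if n: "n \<in> {1..N} - {ns}" for n
  proof -
    have "multiplicity (int p) (a n) \<le> maxval p a N"
      unfolding maxval_def using n by (intro Max_ge) auto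
    moreover have "multiplicity (int p) (a n) \<noteq> maxval p a N"
      using ns n by auto
    ultimately show ?thesis
      using max by simp
  qed
  moreover have "int p dvd a ns"
    using multiplicity_dvd'[of 1 "int p" "a ns"] pos max by simp
  then have "\<not> int p dvd b ns"
    using coprime ns_in by auto
  moreover have "prime_elem (int p)"
    using p by simp
  ultimately show ?thesis
    using multiplicity_partial_numer[of "int p" ns N a b] ns_in nz max by simp
qed

locale valuation_conditions =
  fixes K p :: nat and a b :: "nat \<Rightarrow> nat \<Rightarrow> int"
  assumes p_prime: "prime p"
    and nonzero: "\<forall>k\<in>{1..K}. \<forall>n\<ge>1. a k n \<noteq> 0 \<and> b k n \<noteq> 0"
    and coprime_p: "\<forall>k\<in>{1..K}. \<forall>n\<ge>1. \<not> int p dvd gcd (a k n) (b k n)"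
    and unique_max: "\<forall>k\<in>{1..K}. \<forall>\<^sub>F N in sequentially.
          card {n\<in>{1..N}. multiplicity (int p) (a k n) = maxval p (a k) N} = 1"
    and ratio_lim: "\<forall>k\<in>{1..K}.
          filterlim (\<lambda>N. real (maxval p (a k) N) / (1 + real (maxval p (a (k - 1)) N)))
            at_top sequentially"
begin

lemma eventually_maxval_ratio_ge:
  "\<forall>\<^sub>F N in sequentially. \<forall>k\<in>{1..K}. R * (1 + maxval p (a (k - 1)) N) \<le> maxval p (a k) N"
proof (intro eventually_ball_finite ballI)
  fix k assume k: "k \<in> {1..K}"
  have "\<forall>\<^sub>F N in sequentially. real R \<le> real (maxval p (a k) N) / (1 + real (maxval p (a (k - 1)) N))"
    using ratio_lim k unfolding filterlim_at_top by blast
  then show "\<forall>\<^sub>F N in sequentially. R * (1 + maxval p (a (k - 1)) N) \<le> maxval p (a k) N"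
  proof eventually_elim
    case (elim N)
    then have "real (R * (1 + maxval p (a (k - 1)) N)) \<le> real (maxval p (a k) N)"
      by (simp add: field_simps)
    then show ?case
      by (simp only: of_nat_le_iff)
  qed
qed simp

lemma eventually_cleared_eval_partial_nonzero:
  fixes C :: "(nat \<Rightarrow> nat) \<Rightarrow> int"
  assumes S: "finite S" "S \<noteq> {}" and C: "\<forall>e\<in>S. C e \<noteq> 0"
    and supp: "\<forall>e\<in>S. \<forall>i. i \<notin> {1..K} \<longrightarrow> e i = 0" and E: "\<forall>e\<in>S. \<forall>k\<in>{1..K}. e k \<le> E"
  shows "\<forall>\<^sub>F N in sequentially.
    cleared_eval K E S C (\<lambda>k. partial_numer (a k) (b k) N) (\<lambda>k. partial_denom (a k) N) \<noteq> 0"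
proof -
  define c where "c = (\<Sum>e\<in>S. multiplicity (int p) (C e))"
  have C_c: "\<forall>e\<in>S. C e \<noteq> 0 \<and> multiplicity (int p) (C e) \<le> c"
    using C S unfolding c_def by (auto intro: member_le_sum)
  have "\<forall>\<^sub>F N in sequentially. (\<forall>k\<in>{1..K}. (E * K + c + 1) * (1 + maxval p (a (k - 1)) N) \<le> maxval p (a k) N) \<and>
      (\<forall>k\<in>{1..K}. card {n\<in>{1..N}. multiplicity (int p) (a k n) = maxval p (a k) N} = 1)"
    using unique_max by (intro eventually_conj eventually_maxval_ratio_ge eventually_ball_finite) auto
  then show ?thesis
  proof eventually_elim
    case (elim N)
    let ?M = "\<lambda>k. maxval p (a k) N"
    have superincreasing: "\<forall>j\<in>{1..K}. E * (\<Sum>k\<in>{1..<j}. ?M k) + c < ?M j"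
      using elim by (intro superincreasing_if_ratio_ge) auto
    show ?case
    proof (rule cleared_eval_nonzero[where M = ?M])
      show "prime_elem (int p)"
        using p_prime by simp
      show "\<forall>k\<in>{1..K}. partial_numer (a k) (b k) N \<noteq> 0 \<and> partial_denom (a k) N \<noteq> 0 \<and>
          multiplicity (int p) (partial_numer (a k) (b k) N) + ?M k = multiplicity (int p) (partial_denom (a k) N)"
      proof
        fix k assume k: "k \<in> {1..K}"
        then have "?M k > 0"
          using superincreasing by fastforce
        then show "partial_numer (a k) (b k) N \<noteq> 0 \<and> partial_denom (a k) N \<noteq> 0 \<and>
            multiplicity (int p) (partial_numer (a k) (b k) N) + ?M k = multiplicity (int p) (partial_denom (a k) N)"
          using multiplicity_partial_numer_maxval[OF p_prime] elim nonzero coprime_p k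
          by (auto simp: partial_denom_def)
      qed
      show "\<forall>e\<in>S. \<forall>e'\<in>S. e \<noteq> e' \<longrightarrow>
          (\<Sum>k\<in>{1..K}. e k * ?M k) + c < (\<Sum>k\<in>{1..K}. e' k * ?M k) \<or>
          (\<Sum>k\<in>{1..K}. e' k * ?M k) + c < (\<Sum>k\<in>{1..K}. e k * ?M k)"
        using supp E superincreasing by (intro ballI impI weighted_sums_separated) auto
    qed (use S C_c E in auto)
  qed
qed

end

section \<open>Real estimates\<close>

lemma abs_quotient_le_powr:
  fixes x y s L \<eta> :: real
  assumes s: "s \<ge> 1" and y: "\<bar>y\<bar> \<le> 2 powr L" and x: "s * 2 powr (- L) \<le> \<bar>x\<bar>"
    and L: "2 powr L \<le> s powr \<eta>"
  shows "\<bar>y / x\<bar> \<le> s powr (2 * \<eta> - 1)"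
proof -
  have "s powr (1 - \<eta>) = s / s powr \<eta>"
    using s by (simp add: powr_diff)
  also have "\<dots> \<le> s / 2 powr L"
    using s L by (intro divide_left_mono) auto
  also have "\<dots> \<le> \<bar>x\<bar>"
    using x by (simp add: powr_minus divide_inverse)
  finally have x': "s powr (1 - \<eta>) \<le> \<bar>x\<bar>" .
  have "\<bar>y / x\<bar> \<le> s powr \<eta> / s powr (1 - \<eta>)"
    unfolding abs_divide using s y L x' by (intro frac_le) auto
  also have "\<dots> = s powr (2 * \<eta> - 1)"
    using s by (simp add: powr_diff [symmetric])
  finally show ?thesis .
qed

lemma powr_le_split:
  fixes s X n \<epsilon> \<theta> :: real
  assumes \<theta>: "0 \<le> \<theta>" "\<theta> \<le> 1/2" and X: "1 \<le> X" "X \<le> s"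
    and n: "0 < n" "n powr (1 + \<epsilon>) \<le> s"
  shows "s powr (\<theta> - 1) \<le> X powr (- \<theta>) * n powr ((1 + \<epsilon>) * (2 * \<theta> - 1))"
proof -
  have "s powr (\<theta> - 1) = s powr (- \<theta>) * s powr (2 * \<theta> - 1)"
    by (simp add: powr_add [symmetric])
  also have "\<dots> \<le> X powr (- \<theta>) * (n powr (1 + \<epsilon>)) powr (2 * \<theta> - 1)"
    using \<theta> X n by (intro mult_mono powr_mono2') auto
  also have "\<dots> = X powr (- \<theta>) * n powr ((1 + \<epsilon>) * (2 * \<theta> - 1))"
    by (simp add: powr_powr)
  finally show ?thesis .
qed

lemma ln_abs_le_of_abs_le_max:
  fixes x s L P \<eta> :: real
  assumes s: "s \<ge> 1" and x: "1 \<le> \<bar>x\<bar>" "\<bar>x\<bar> \<le> max (s * 2 powr L) (2 powr P)"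
    and L: "2 powr L \<le> s powr \<eta>" "0 \<le> L" and P: "0 \<le> P"
  shows "ln \<bar>x\<bar> \<le> (1 + \<eta>) * ln s + P * ln 2"
proof -
  have max_le: "max u v \<le> u * v" if "1 \<le> u" "1 \<le> v" for u v :: real
    using mult_left_mono[of 1 v u] mult_right_mono[of 1 u v] that by simp
  have "1 \<le> s * 2 powr L"
    using s ge_one_powr_ge_zero[of 2 L] L(2) mult_mono[of 1 s 1 "2 powr L"] by simp
  then have "max (s * 2 powr L) (2 powr P) \<le> s * 2 powr L * 2 powr P"
    using P by (intro max_le) (simp_all add: ge_one_powr_ge_zero)
  also have "\<dots> \<le> s * s powr \<eta> * 2 powr P"
    using s L by (intro mult_mono) auto
  finally have "\<bar>x\<bar> \<le> s * s powr \<eta> * 2 powr P"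
    using x(2) by linarith
  then have "ln \<bar>x\<bar> \<le> ln (s * s powr \<eta> * 2 powr P)"
    using x(1) by (subst ln_le_cancel_iff) auto
  also have "\<dots> = (1 + \<eta>) * ln s + P * ln 2"
    using s by (simp add: ln_mult ln_powr algebra_simps)
  finally show ?thesis .
qed

lemma frequently_gt_if_limsup_infinity:
  fixes f :: "nat \<Rightarrow> real"
  assumes "limsup (\<lambda>n. ereal (f n)) = \<infinity>"
  shows "\<exists>\<^sub>F n in sequentially. f n > M"
proof (rule ccontr)
  assume "\<not> (\<exists>\<^sub>F n in sequentially. f n > M)"
  then have "\<forall>\<^sub>F n in sequentially. ereal (f n) \<le> ereal M"
    by (simp add: not_frequently not_less)
  then have "limsup (\<lambda>n. ereal (f n)) \<le> ereal M"
    by (rule Limsup_bounded)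
  with assms show False
    by simp
qed

lemma exists_record_index:
  fixes g :: "nat \<Rightarrow> real"
  assumes unbounded: "\<forall>M. \<exists>\<^sub>F n in sequentially. g n > M"
  shows "\<exists>N\<ge>N0. g (Suc N) > G \<and> (\<forall>n\<in>{n1..N}. g n \<le> g (Suc N))"
proof -
  define m0 where "m0 = max N0 n1"
  define G' where "G' = max G (Max (g ` {n1..m0}))"
  obtain n2 where n2: "n2 \<ge> Suc m0" "g n2 > G'"
    using unbounded[rule_format, of G'] unfolding frequently_sequentially by blast
  have "Max (g ` {n1..n2}) \<in> g ` {n1..n2}"
    using n2(1) by (intro Max_in) (auto simp: m0_def)
  then obtain m where m: "m \<in> {n1..n2}" "g m = Max (g ` {n1..n2})"
    by auto
  then have m_max: "g n \<le> g m" if "n \<in> {n1..n2}" for n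
    using that by simp
  have "n2 \<in> {n1..n2}"
    using n2(1) by (simp add: m0_def)
  then have gm: "g m > G'"
    using m_max n2(2) by fastforce
  have "m > m0"
  proof (rule ccontr)
    assume "\<not> m > m0"
    then have "g m \<le> Max (g ` {n1..m0})"
      using m(1) by (intro Max_ge) auto
    with gm show False
      unfolding G'_def by linarith
  qed
  then obtain N where N: "m = Suc N" "N \<ge> m0"
    by (cases m) auto
  have "\<forall>n\<in>{n1..N}. g n \<le> g (Suc N)"
    using m_max m(1) N(1) by auto
  moreover have "g (Suc N) > G" "N \<ge> N0"
    using gm N unfolding G'_def m0_def by auto
  ultimately show ?thesis
    by blast
qed

lemma sum_powers_le_geometric:
  fixes A :: real
  assumes "A > 1" "I \<subseteq> {..N}"
  shows "(\<Sum>n\<in>I. A ^ n) \<le> A ^ Suc N / (A - 1)"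
proof -
  have "(\<Sum>n\<in>I. A ^ n) \<le> (\<Sum>n<Suc N. A ^ n)"
    using assms by (intro sum_mono2) auto
  also have "\<dots> = (A ^ Suc N - 1) / (A - 1)"
    unfolding sum_gp_strict using assms by (simp add: field_simps)
  also have "\<dots> \<le> A ^ Suc N / (A - 1)"
    using assms by (intro divide_right_mono) auto
  finally show ?thesis .
qed

lemma summable_Suc_powr:
  assumes "\<rho> > 1"
  shows "summable (\<lambda>n. real (Suc n) powr (- \<rho>))"
  using assms summable_real_powr_iff[of "- \<rho>"] summable_Suc_iff[of "\<lambda>n. real n powr (- \<rho>)"] by simp

lemma summable_abs_estimates:
  fixes f :: "nat \<Rightarrow> real"
  assumes "summable (\<lambda>n. \<bar>f n\<bar>)"
  shows "\<bar>\<Sum>n<N. f n\<bar> \<le> (\<Sum>n. \<bar>f n\<bar>)" and "\<bar>\<Sum>n. f n\<bar> \<le> (\<Sum>n. \<bar>f n\<bar>)"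
    and "\<bar>(\<Sum>n<N. f n) - (\<Sum>n. f n)\<bar> \<le> (\<Sum>n. \<bar>f (n + N)\<bar>)"
proof -
  show "\<bar>\<Sum>n<N. f n\<bar> \<le> (\<Sum>n. \<bar>f n\<bar>)"
    using assms by (intro order_trans[OF sum_abs] sum_le_suminf) auto
  show "\<bar>\<Sum>n. f n\<bar> \<le> (\<Sum>n. \<bar>f n\<bar>)"
    using assms by (rule summable_rabs)
  have "summable f"
    using assms by (rule summable_rabs_cancel)
  then have "(\<Sum>n. f n) - (\<Sum>n<N. f n) = (\<Sum>n. f (n + N))"
    by (simp add: suminf_minus_initial_segment)
  moreover have "\<bar>\<Sum>n. f (n + N)\<bar> \<le> (\<Sum>n. \<bar>f (n + N)\<bar>)"
    using assms by (intro summable_rabs summable_ignore_initial_segment)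
  ultimately show "\<bar>(\<Sum>n<N. f n) - (\<Sum>n. f n)\<bar> \<le> (\<Sum>n. \<bar>f (n + N)\<bar>)"
    by (simp add: abs_minus_commute)
qed

lemma power_mult_tail_lt_1:
  fixes P X T Lf Z c \<theta> :: real and E K :: nat
  assumes P: "P > 0" and X: "X \<ge> 1" and \<theta>: "\<theta> > 0"
    and ln_P: "E * ln P \<le> c + \<theta> / 2 * ln X"
    and T: "0 \<le> T" "T \<le> K * (X powr (- \<theta>) * Z)" and Lf: "Lf \<ge> 0" and Z: "Z \<ge> 0"
    and X_large: "ln X > 2 / \<theta> * ln (exp c * Lf * (K * Z) + 1)"
  shows "P ^ E * Lf * T < 1"
proof -
  define W where "W = exp c * Lf * (K * Z)"
  have W: "W \<ge> 0"
    unfolding W_def using Lf Z by simp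
  have "P ^ E = exp (E * ln P)"
    using P by (simp add: exp_of_nat_mult)
  also have "\<dots> \<le> exp c * X powr (\<theta> / 2)"
    using ln_P X by (simp add: powr_def exp_add [symmetric] mult.commute)
  finally have "P ^ E * Lf * T \<le> exp c * X powr (\<theta> / 2) * Lf * (K * (X powr (- \<theta>) * Z))"
    using T Lf by (intro mult_mono) auto
  also have "\<dots> = W * (X powr (\<theta> / 2) * X powr (- \<theta>))"
    by (simp add: W_def algebra_simps)
  also have "X powr (\<theta> / 2) * X powr (- \<theta>) = X powr (- (\<theta> / 2))"
    unfolding powr_add [symmetric] by simp
  also have "W * X powr (- (\<theta> / 2)) < 1"
  proof -
    have "ln (W + 1) < \<theta> / 2 * ln X"
      using X_large \<theta> unfolding W_def by (simp add: field_simps)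
    then have "exp (ln (W + 1)) < exp (\<theta> / 2 * ln X)"
      by (rule exp_less_mono)
    then have "W + 1 < X powr (\<theta> / 2)"
      using W X by (simp add: powr_def)
    then show ?thesis
      using W by (simp add: powr_minus_divide divide_less_eq)
  qed
  finally show ?thesis .
qed

section \<open>Growth of the series\<close>

locale growth_conditions =
  fixes K :: nat and \<epsilon> \<kappa> :: real and a b :: "nat \<Rightarrow> nat \<Rightarrow> int" and s :: "nat \<Rightarrow> int" and A0 :: int
  assumes K_pos: "K \<ge> 1" and eps_pos: "\<epsilon> > 0" and kappa: "0 < \<kappa>" "\<kappa> < 1"
    and a_nonzero: "\<forall>k\<in>{1..K}. \<forall>n\<ge>1. a k n \<noteq> 0"
    and s_pos: "\<forall>n\<ge>1. s n > 0" and s_mono: "\<forall>n\<ge>1. s n \<le> s (Suc n)"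
    and growth: "\<forall>k\<in>{1..K}. \<forall>A::int. A \<ge> A0 \<longrightarrow> (\<forall>\<^sub>F n in sequentially.
          real n powr (1 + \<epsilon>) \<le> real_of_int (s n) \<and> s n \<le> s (Suc n) \<and>
          \<bar>real_of_int (b k n)\<bar> \<le> 2 powr (log 2 (real_of_int (s n)) powr \<kappa>) \<and>
          real_of_int (s n) * 2 powr (- (log 2 (real_of_int (s n)) powr \<kappa>))
            \<le> \<bar>real_of_int (a k n)\<bar> \<and>
          \<bar>real_of_int (a k n)\<bar> \<le> max (real_of_int (s n) * 2 powr (log 2 (real_of_int (s n)) powr \<kappa>))
                                       (2 powr (real_of_int A ^ n)))"
    and limsup_inf: "\<forall>A::int. A \<ge> A0 \<longrightarrow>
          limsup (\<lambda>n. ereal (real_of_int (s n) powr (1 / real_of_int A ^ n))) = \<infinity>"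
begin

definition \<theta> :: real where
  "\<theta> = \<epsilon> / (4 * (1 + \<epsilon>))"

definition ratio :: "nat \<Rightarrow> nat \<Rightarrow> real" where
  "ratio k n = real_of_int (b k n) / real_of_int (a k n)"

lemma theta_pos: "0 < \<theta>" and theta_le: "\<theta> \<le> 1 / 4"
  and theta_exponent: "(1 + \<epsilon>) * (2 * \<theta> - 1) = - (1 + \<epsilon> / 2)"
  using eps_pos by (auto simp: \<theta>_def field_simps)

lemma s_ge_1: "1 \<le> n \<Longrightarrow> 1 \<le> real_of_int (s n)"
  using s_pos by (simp add: int_one_le_iff_zero_less)

lemma s_mono_le:
  assumes "1 \<le> n" "n \<le> m"
  shows "s n \<le> s m"
  using assms(2)
proof (induction rule: dec_induct)
  case (step k)
  then have "s k \<le> s (Suc k)"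
    using s_mono assms(1) by simp
  with step.IH show ?case
    by simp
qed simp

lemma eventually_growth:
  assumes "A \<ge> A0"
  shows "\<forall>\<^sub>F n in sequentially. \<forall>k\<in>{1..K}.
    real n powr (1 + \<epsilon>) \<le> real_of_int (s n) \<and> s n \<le> s (Suc n) \<and>
    \<bar>real_of_int (b k n)\<bar> \<le> 2 powr (log 2 (real_of_int (s n)) powr \<kappa>) \<and>
    real_of_int (s n) * 2 powr (- (log 2 (real_of_int (s n)) powr \<kappa>)) \<le> \<bar>real_of_int (a k n)\<bar> \<and>
    \<bar>real_of_int (a k n)\<bar> \<le> max (real_of_int (s n) * 2 powr (log 2 (real_of_int (s n)) powr \<kappa>))
      (2 powr (real_of_int A ^ n))"
  using growth assms by (subst eventually_ball_finite_distrib) auto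

lemma s_tendsto_infinity: "filterlim (\<lambda>n. real_of_int (s n)) at_top sequentially"
proof (rule filterlim_at_top_mono)
  show "filterlim (\<lambda>n. real n powr (1 + \<epsilon>)) at_top sequentially"
    using eps_pos by real_asymp
  show "\<forall>\<^sub>F n in sequentially. real n powr (1 + \<epsilon>) \<le> real_of_int (s n)"
    using eventually_growth[OF order_refl]
    by eventually_elim (use K_pos in \<open>auto dest: bspec[of _ _ 1]\<close>)
qed

lemma eventually_two_powr_log_powr_le:
  "\<forall>\<^sub>F n in sequentially. 2 powr (log 2 (real_of_int (s n)) powr \<kappa>) \<le> real_of_int (s n) powr (\<theta> / 2)"
proof -
  have "\<forall>\<^sub>F y in at_top. 2 powr (log 2 y powr \<kappa>) \<le> y powr (\<theta> / 2)"
    using kappa theta_pos by real_asymp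
  then show ?thesis
    using s_tendsto_infinity by (rule eventually_compose_filterlim)
qed

lemma eventually_abs_ratio_le:
  "\<forall>\<^sub>F n in sequentially. \<forall>k\<in>{1..K}. \<forall>X. 1 \<le> X \<and> X \<le> real_of_int (s n) \<longrightarrow>
    \<bar>ratio k n\<bar> \<le> X powr (- \<theta>) * real n powr (- (1 + \<epsilon> / 2))"
  using eventually_growth[OF order_refl] eventually_two_powr_log_powr_le eventually_gt_at_top[of 0]
proof eventually_elim
  case (elim n)
  show ?case
  proof (intro ballI allI impI)
    fix k X assume k: "k \<in> {1..K}" and X: "1 \<le> X \<and> X \<le> real_of_int (s n)"
    have "\<bar>ratio k n\<bar> \<le> real_of_int (s n) powr (2 * (\<theta> / 2) - 1)"
      unfolding ratio_def by (rule abs_quotient_le_powr) (use elim k X in auto)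
    also have "\<dots> = real_of_int (s n) powr (\<theta> - 1)"
      by simp
    also have "\<dots> \<le> X powr (- \<theta>) * real n powr ((1 + \<epsilon>) * (2 * \<theta> - 1))"
      using elim k X theta_pos theta_le by (intro powr_le_split) auto
    finally show "\<bar>ratio k n\<bar> \<le> X powr (- \<theta>) * real n powr (- (1 + \<epsilon> / 2))"
      by (simp add: theta_exponent)
  qed
qed

lemma eventually_ln_abs_a_le:
  assumes A: "A \<ge> A0" "A \<ge> 0"
  shows "\<forall>\<^sub>F n in sequentially. \<forall>k\<in>{1..K}. \<forall>\<gamma>\<ge>ln 2.
    ln (real_of_int (s n)) \<le> \<gamma> * real_of_int A ^ n \<longrightarrow>
    ln \<bar>real_of_int (a k n)\<bar> \<le> 3 * (\<gamma> * real_of_int A ^ n)"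
  using eventually_growth[OF A(1)] eventually_two_powr_log_powr_le eventually_ge_at_top[of 1]
proof eventually_elim
  case (elim n)
  show ?case
  proof (intro ballI allI impI)
    fix k \<gamma> assume k: "k \<in> {1..K}" and \<gamma>: "\<gamma> \<ge> ln 2"
      and s_le: "ln (real_of_int (s n)) \<le> \<gamma> * real_of_int A ^ n"
    have "0 \<le> \<gamma>"
      using \<gamma> ln_ge_zero[of 2] by linarith
    then have Y: "0 \<le> \<gamma> * real_of_int A ^ n"
      using A(2) by simp
    have "1 \<le> \<bar>real_of_int (a k n)\<bar>"
      using a_nonzero k elim by (simp add: Ints_nonzero_abs_ge1)
    then have "ln \<bar>real_of_int (a k n)\<bar> \<le> (1 + \<theta> / 2) * ln (real_of_int (s n)) + real_of_int A ^ n * ln 2"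
      using elim k s_ge_1 A(2) by (intro ln_abs_le_of_abs_le_max) auto
    moreover have "(1 + \<theta> / 2) * ln (real_of_int (s n)) \<le> (1 + \<theta> / 2) * (\<gamma> * real_of_int A ^ n)"
      using s_le theta_pos by (intro mult_left_mono) auto
    moreover have "(1 + \<theta> / 2) * (\<gamma> * real_of_int A ^ n) \<le> 2 * (\<gamma> * real_of_int A ^ n)"
      using Y theta_le by (intro mult_right_mono) auto
    moreover have "real_of_int A ^ n * ln 2 \<le> \<gamma> * real_of_int A ^ n"
      using mult_left_mono[OF \<gamma>, of "real_of_int A ^ n"] A(2) by (simp add: mult.commute)
    ultimately show "ln \<bar>real_of_int (a k n)\<bar> \<le> 3 * (\<gamma> * real_of_int A ^ n)"
      by linarith
  qed
qed

lemma summable_abs_ratio: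
  assumes k: "k \<in> {1..K}"
  shows "summable (\<lambda>n. \<bar>ratio k (Suc n)\<bar>)"
proof (rule summable_comparison_test_ev)
  show "summable (\<lambda>n. real (Suc n) powr (- (1 + \<epsilon> / 2)))"
    using eps_pos by (intro summable_Suc_powr) simp
  have "\<forall>\<^sub>F n in sequentially. \<bar>ratio k n\<bar> \<le> real n powr (- (1 + \<epsilon> / 2))"
    using eventually_abs_ratio_le eventually_ge_at_top[of 1]
    by eventually_elim (use k s_ge_1 in force)
  then show "\<forall>\<^sub>F n in sequentially. norm \<bar>ratio k (Suc n)\<bar> \<le> real (Suc n) powr (- (1 + \<epsilon> / 2))"
    using eventually_sequentially_Suc[where P = "\<lambda>n. \<bar>ratio k n\<bar> \<le> real n powr (- (1 + \<epsilon> / 2))"]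
    by simp
qed

lemma eventually_tail_le:
  "\<forall>\<^sub>F N in sequentially. \<forall>k\<in>{1..K}. (\<Sum>n. \<bar>ratio k (Suc (n + N))\<bar>)
    \<le> real_of_int (s (Suc N)) powr (- \<theta>) * (\<Sum>n. real (Suc n) powr (- (1 + \<epsilon> / 2)))"
proof -
  obtain n1 where n1: "\<forall>n\<ge>n1. \<forall>k\<in>{1..K}. \<forall>X. 1 \<le> X \<and> X \<le> real_of_int (s n) \<longrightarrow>
      \<bar>ratio k n\<bar> \<le> X powr (- \<theta>) * real n powr (- (1 + \<epsilon> / 2))"
    using eventually_abs_ratio_le unfolding eventually_sequentially by blast
  have summable: "summable (\<lambda>n. real (Suc n) powr (- (1 + \<epsilon> / 2)))"
    using eps_pos by (intro summable_Suc_powr) simp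
  show ?thesis
    unfolding eventually_sequentially
  proof (intro exI allI impI ballI)
    fix N k assume N: "n1 \<le> N" and k: "k \<in> {1..K}"
    define X where "X = real_of_int (s (Suc N))"
    have "(\<Sum>n. \<bar>ratio k (Suc (n + N))\<bar>) \<le> (\<Sum>n. X powr (- \<theta>) * real (Suc n) powr (- (1 + \<epsilon> / 2)))"
    proof (rule suminf_le)
      fix n
      have "X \<le> real_of_int (s (Suc (n + N)))"
        unfolding X_def using s_mono_le[of "Suc N" "Suc (n + N)"] by simp
      moreover have "1 \<le> X"
        unfolding X_def by (rule s_ge_1) simp
      ultimately have "\<bar>ratio k (Suc (n + N))\<bar> \<le> X powr (- \<theta>) * real (Suc (n + N)) powr (- (1 + \<epsilon> / 2))"
        using n1[rule_format, of "Suc (n + N)" k X] N k by simp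
      also have "\<dots> \<le> X powr (- \<theta>) * real (Suc n) powr (- (1 + \<epsilon> / 2))"
        using eps_pos by (intro mult_left_mono powr_mono2') auto
      finally show "\<bar>ratio k (Suc (n + N))\<bar> \<le> X powr (- \<theta>) * real (Suc n) powr (- (1 + \<epsilon> / 2))" .
    next
      show "summable (\<lambda>n. \<bar>ratio k (Suc (n + N))\<bar>)"
        using summable_ignore_initial_segment[OF summable_abs_ratio[OF k], of N] by simp
      show "summable (\<lambda>n. X powr (- \<theta>) * real (Suc n) powr (- (1 + \<epsilon> / 2)))"
        using summable by (rule summable_mult)
    qed
    also have "\<dots> = X powr (- \<theta>) * (\<Sum>n. real (Suc n) powr (- (1 + \<epsilon> / 2)))"
      using summable by (rule suminf_mult)
    finally show "(\<Sum>n. \<bar>ratio k (Suc (n + N))\<bar>)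
        \<le> real_of_int (s (Suc N)) powr (- \<theta>) * (\<Sum>n. real (Suc n) powr (- (1 + \<epsilon> / 2)))"
      unfolding X_def .
  qed
qed

lemma ln_abs_partial_denom_le:
  assumes A: "A \<ge> A0" "A \<ge> 2"
  obtains n1 where "\<forall>N\<ge>n1. \<forall>\<gamma>\<ge>ln 2. \<forall>k\<in>{1..K}.
    (\<forall>n\<in>{n1..N}. ln (real_of_int (s n)) \<le> \<gamma> * real_of_int A ^ n) \<longrightarrow>
    ln \<bar>real_of_int (partial_denom (a k) N)\<bar>
      \<le> (\<Sum>n\<in>{1..<n1}. ln \<bar>real_of_int (a k n)\<bar>) + 3 * \<gamma> * real_of_int A ^ Suc N / (real_of_int A - 1)"
proof -
  have "\<forall>\<^sub>F n in sequentially. 1 \<le> n \<and> (\<forall>k\<in>{1..K}. \<forall>\<gamma>\<ge>ln 2.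
      ln (real_of_int (s n)) \<le> \<gamma> * real_of_int A ^ n \<longrightarrow>
      ln \<bar>real_of_int (a k n)\<bar> \<le> 3 * (\<gamma> * real_of_int A ^ n))"
    using A by (intro eventually_conj eventually_ge_at_top eventually_ln_abs_a_le) auto
  then obtain n1 where n1: "\<forall>n\<ge>n1. 1 \<le> n \<and> (\<forall>k\<in>{1..K}. \<forall>\<gamma>\<ge>ln 2.
      ln (real_of_int (s n)) \<le> \<gamma> * real_of_int A ^ n \<longrightarrow>
      ln \<bar>real_of_int (a k n)\<bar> \<le> 3 * (\<gamma> * real_of_int A ^ n))"
    unfolding eventually_sequentially by blast
  show thesis
  proof (rule that[of n1], intro allI impI ballI)
    fix N \<gamma> k assume N: "n1 \<le> N" and \<gamma>: "\<gamma> \<ge> ln 2" and k: "k \<in> {1..K}"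
      and s_le: "\<forall>n\<in>{n1..N}. ln (real_of_int (s n)) \<le> \<gamma> * real_of_int A ^ n"
    have \<gamma>0: "0 \<le> \<gamma>"
      using \<gamma> ln_ge_zero[of 2] by linarith
    have "{1..N} = {1..<n1} \<union> {n1..N}"
      using n1 N by auto
    then have "ln \<bar>real_of_int (partial_denom (a k) N)\<bar> =
        (\<Sum>n\<in>{1..<n1}. ln \<bar>real_of_int (a k n)\<bar>) + (\<Sum>n\<in>{n1..N}. ln \<bar>real_of_int (a k n)\<bar>)"
      unfolding partial_denom_def of_int_prod abs_prod using a_nonzero k
      by (subst ln_prod) (auto intro: sum.union_disjoint)
    also have "(\<Sum>n\<in>{n1..N}. ln \<bar>real_of_int (a k n)\<bar>) \<le> (\<Sum>n\<in>{n1..N}. 3 * (\<gamma> * real_of_int A ^ n))"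
      using n1 s_le \<gamma> k by (intro sum_mono) auto
    also have "\<dots> \<le> 3 * \<gamma> * (real_of_int A ^ Suc N / (real_of_int A - 1))"
      unfolding sum_distrib_left[symmetric] mult.assoc using \<gamma>0 A(2)
      by (intro mult_left_mono sum_powers_le_geometric) auto
    finally show "ln \<bar>real_of_int (partial_denom (a k) N)\<bar>
        \<le> (\<Sum>n\<in>{1..<n1}. ln \<bar>real_of_int (a k n)\<bar>) + 3 * \<gamma> * real_of_int A ^ Suc N / (real_of_int A - 1)"
      by simp
  qed
qed

lemma frequently_ln_s_gt:
  assumes "A \<ge> A0" "A \<ge> 1"
  shows "\<exists>\<^sub>F n in sequentially. ln (real_of_int (s n)) / real_of_int A ^ n > M"
proof -
  have "\<exists>\<^sub>F n in sequentially. real_of_int (s n) powr (1 / real_of_int A ^ n) > exp M"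
    using limsup_inf assms(1) by (intro frequently_gt_if_limsup_infinity) auto
  then show ?thesis
    using eventually_ge_at_top[of 1]
  proof (rule frequently_eventually_frequently[THEN frequently_elim1])
    fix n assume "exp M < real_of_int (s n) powr (1 / real_of_int A ^ n) \<and> 1 \<le> n"
    then show "ln (real_of_int (s n)) / real_of_int A ^ n > M"
      using s_ge_1[of n] by (simp add: powr_def)
  qed
qed

definition denom_prod :: "nat \<Rightarrow> real" where
  "denom_prod N = (\<Prod>k\<in>{1..K}. \<bar>real_of_int (partial_denom (a k) N)\<bar>)"

definition tail_sum :: "nat \<Rightarrow> real" where
  "tail_sum N = (\<Sum>k\<in>{1..K}. \<Sum>n. \<bar>ratio k (Suc (n + N))\<bar>)"

definition series_bound :: real where
  "series_bound = 1 + (\<Sum>k\<in>{1..K}. \<Sum>n. \<bar>ratio k (Suc n)\<bar>)"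

lemma denom_prod_pos: "denom_prod N > 0"
  unfolding denom_prod_def using a_nonzero by (intro prod_pos) (auto simp: partial_denom_def)

lemma ln_denom_prod_le:
  assumes A: "A \<ge> A0" "A \<ge> 2" and A_large: "3 * real K * real E / (real_of_int A - 1) \<le> \<theta> / 2"
  obtains n1 c where "\<forall>N\<ge>n1.
    ln 2 \<le> ln (real_of_int (s (Suc N))) / real_of_int A ^ Suc N \<and>
    (\<forall>n\<in>{n1..N}. ln (real_of_int (s n)) / real_of_int A ^ n \<le> ln (real_of_int (s (Suc N))) / real_of_int A ^ Suc N)
    \<longrightarrow> E * ln (denom_prod N) \<le> c + \<theta> / 2 * ln (real_of_int (s (Suc N)))"
proof -
  obtain n1 where denom: "\<forall>N\<ge>n1. \<forall>\<gamma>\<ge>ln 2. \<forall>k\<in>{1..K}.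
      (\<forall>n\<in>{n1..N}. ln (real_of_int (s n)) \<le> \<gamma> * real_of_int A ^ n) \<longrightarrow>
      ln \<bar>real_of_int (partial_denom (a k) N)\<bar>
        \<le> (\<Sum>n\<in>{1..<n1}. ln \<bar>real_of_int (a k n)\<bar>) + 3 * \<gamma> * real_of_int A ^ Suc N / (real_of_int A - 1)"
    using ln_abs_partial_denom_le[OF A] by blast
  define c where "c = E * (\<Sum>k\<in>{1..K}. \<Sum>n\<in>{1..<n1}. ln \<bar>real_of_int (a k n)\<bar>)"
  show thesis
  proof (rule that[of n1 c], intro allI impI, elim conjE)
    fix N
    define Y where "Y = ln (real_of_int (s (Suc N)))"
    define \<gamma> where "\<gamma> = Y / real_of_int A ^ Suc N"
    assume N: "n1 \<le> N" and \<gamma>: "ln 2 \<le> Y / real_of_int A ^ Suc N"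
      and below: "\<forall>n\<in>{n1..N}. ln (real_of_int (s n)) / real_of_int A ^ n \<le> Y / real_of_int A ^ Suc N"
    have A_pow: "real_of_int A ^ n > 0" for n
      using A(2) by simp
    have Y: "Y = \<gamma> * real_of_int A ^ Suc N" "0 \<le> Y"
      unfolding \<gamma>_def Y_def using A(2) s_ge_1[of "Suc N"] by simp_all
    have "\<forall>n\<in>{n1..N}. ln (real_of_int (s n)) \<le> \<gamma> * real_of_int A ^ n"
      using below A_pow unfolding \<gamma>_def by (simp add: pos_divide_le_eq)
    moreover have "\<gamma> \<ge> ln 2"
      using \<gamma> unfolding \<gamma>_def .
    ultimately have per_k: "ln \<bar>real_of_int (partial_denom (a k) N)\<bar>
        \<le> (\<Sum>n\<in>{1..<n1}. ln \<bar>real_of_int (a k n)\<bar>) + 3 * Y / (real_of_int A - 1)" if "k \<in> {1..K}" for k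
      using denom N that unfolding Y(1) by (auto simp: mult.assoc)
    have "ln (denom_prod N) = (\<Sum>k\<in>{1..K}. ln \<bar>real_of_int (partial_denom (a k) N)\<bar>)"
      unfolding denom_prod_def using a_nonzero by (intro ln_prod) (auto simp: partial_denom_def)
    also have "\<dots> \<le> (\<Sum>k\<in>{1..K}. (\<Sum>n\<in>{1..<n1}. ln \<bar>real_of_int (a k n)\<bar>) + 3 * Y / (real_of_int A - 1))"
      by (rule sum_mono) (rule per_k)
    finally have "E * ln (denom_prod N)
        \<le> E * ((\<Sum>k\<in>{1..K}. \<Sum>n\<in>{1..<n1}. ln \<bar>real_of_int (a k n)\<bar>) + real K * (3 * Y / (real_of_int A - 1)))"
      by (intro mult_left_mono) (simp_all add: sum.distrib)
    also have "\<dots> = c + 3 * real K * real E / (real_of_int A - 1) * Y"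
      unfolding c_def by (simp add: algebra_simps)
    also have "\<dots> \<le> c + \<theta> / 2 * Y"
      using A_large Y(2) by (intro add_left_mono mult_right_mono)
    finally show "E * ln (denom_prod N) \<le> c + \<theta> / 2 * ln (real_of_int (s (Suc N)))"
      unfolding Y_def .
  qed
qed

lemma tail_sum_nonneg: "0 \<le> tail_sum N"
  unfolding tail_sum_def using summable_ignore_initial_segment[OF summable_abs_ratio, of _ N]
  by (intro sum_nonneg suminf_nonneg) auto

lemma exists_large_exponent:
  obtains A :: int where "A \<ge> A0" "A \<ge> 2" "3 * real K * real E / (real_of_int A - 1) \<le> \<theta> / 2"
proof
  define A :: int where "A = max A0 (max 2 \<lceil>1 + 6 * real K * real E / \<theta>\<rceil>)"
  show "A \<ge> A0" "A \<ge> 2"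
    unfolding A_def by auto
  have "6 * real K * real E / \<theta> \<le> real_of_int A - 1"
    unfolding A_def by linarith
  then show "3 * real K * real E / (real_of_int A - 1) \<le> \<theta> / 2"
    using theta_pos \<open>A \<ge> 2\<close> by (simp add: field_simps)
qed

lemma frequently_denom_power_tail_lt_1:
  assumes Lf: "Lf \<ge> 0"
  shows "\<exists>\<^sub>F N in sequentially. denom_prod N ^ E * Lf * tail_sum N < 1"
proof -
  obtain A :: int where A: "A \<ge> A0" "A \<ge> 2"
    and A_large: "3 * real K * real E / (real_of_int A - 1) \<le> \<theta> / 2"
    by (rule exists_large_exponent)
  define g where "g n = ln (real_of_int (s n)) / real_of_int A ^ n" for n
  obtain n1 c where denom: "\<forall>N\<ge>n1. ln 2 \<le> g (Suc N) \<and> (\<forall>n\<in>{n1..N}. g n \<le> g (Suc N))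
      \<longrightarrow> E * ln (denom_prod N) \<le> c + \<theta> / 2 * ln (real_of_int (s (Suc N)))"
    unfolding g_def using ln_denom_prod_le[OF A A_large] by blast
  define Z where "Z = (\<Sum>n. real (Suc n) powr (- (1 + \<epsilon> / 2)))"
  have Z: "Z \<ge> 0"
    unfolding Z_def using eps_pos by (intro suminf_nonneg summable_Suc_powr) auto
  obtain n2 where tail: "\<forall>N\<ge>n2. \<forall>k\<in>{1..K}.
      (\<Sum>n. \<bar>ratio k (Suc (n + N))\<bar>) \<le> real_of_int (s (Suc N)) powr (- \<theta>) * Z"
    using eventually_tail_le unfolding eventually_sequentially Z_def by blast
  have unbounded: "\<forall>M. \<exists>\<^sub>F n in sequentially. g n > M"
    unfolding g_def using A by (intro allI frequently_ln_s_gt) auto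
  show ?thesis
    unfolding frequently_sequentially
  proof
    fix N0
    obtain N where N: "N \<ge> max N0 (max n1 n2)"
      and g_large: "g (Suc N) > max (ln 2) (2 / \<theta> * ln (exp c * Lf * (K * Z) + 1))"
      and g_record: "\<forall>n\<in>{n1..N}. g n \<le> g (Suc N)"
      using exists_record_index[OF unbounded] by blast
    define X where "X = real_of_int (s (Suc N))"
    have X: "X \<ge> 1"
      unfolding X_def by (rule s_ge_1) simp
    have "g (Suc N) \<le> ln X / 1"
      unfolding g_def using X one_le_power[of "real_of_int A" "Suc N"] A(2) unfolding X_def
      by (intro divide_left_mono) simp_all
    then have "ln X > 2 / \<theta> * ln (exp c * Lf * (K * Z) + 1)"
      using g_large by simp
    moreover have "E * ln (denom_prod N) \<le> c + \<theta> / 2 * ln X"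
      using denom N g_large g_record unfolding X_def by auto
    moreover have "tail_sum N \<le> K * (X powr (- \<theta>) * Z)"
      using sum_mono[of "{1..K}" "\<lambda>k. \<Sum>n. \<bar>ratio k (Suc (n + N))\<bar>" "\<lambda>_. X powr (- \<theta>) * Z"] tail N
      unfolding tail_sum_def X_def by auto
    ultimately show "\<exists>N\<ge>N0. denom_prod N ^ E * Lf * tail_sum N < 1"
      using power_mult_tail_lt_1[OF denom_prod_pos X theta_pos _ tail_sum_nonneg _ Lf Z] N
      by (intro exI[of _ N]) auto
  qed
qed

lemma series_bound_ge_1: "1 \<le> series_bound"
  unfolding series_bound_def using summable_abs_ratio
  by (simp, intro sum_nonneg suminf_nonneg) auto

lemma partial_series_estimates:
  assumes k: "k \<in> {1..K}"
  shows "\<bar>\<Sum>n<N. ratio k (Suc n)\<bar> \<le> series_bound" and "\<bar>\<Sum>n. ratio k (Suc n)\<bar> \<le> series_bound"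
    and "\<bar>(\<Sum>n<N. ratio k (Suc n)) - (\<Sum>n. ratio k (Suc n))\<bar> \<le> tail_sum N"
proof -
  have "(\<Sum>n. \<bar>ratio k (Suc n)\<bar>) \<le> series_bound - 1"
    unfolding series_bound_def using k summable_abs_ratio
    by (simp, intro member_le_sum suminf_nonneg) auto
  then show "\<bar>\<Sum>n<N. ratio k (Suc n)\<bar> \<le> series_bound" "\<bar>\<Sum>n. ratio k (Suc n)\<bar> \<le> series_bound"
    using summable_abs_estimates(1)[OF summable_abs_ratio[OF k], where N = N]
      summable_abs_estimates(2)[OF summable_abs_ratio[OF k]] by linarith+
  have "(\<Sum>n. \<bar>ratio k (Suc (n + N))\<bar>) \<le> tail_sum N"
    unfolding tail_sum_def using k summable_ignore_initial_segment[OF summable_abs_ratio, of _ N]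
    by (intro member_le_sum suminf_nonneg) auto
  then show "\<bar>(\<Sum>n<N. ratio k (Suc n)) - (\<Sum>n. ratio k (Suc n))\<bar> \<le> tail_sum N"
    using summable_abs_estimates(3)[OF summable_abs_ratio[OF k], where N = N] by simp
qed

lemma frequently_abs_cleared_eval_lt_1:
  fixes C :: "(nat \<Rightarrow> nat) \<Rightarrow> int" and \<alpha> :: "nat \<Rightarrow> real"
  assumes E: "\<forall>e\<in>S. \<forall>k\<in>{1..K}. e k \<le> E"
    and \<alpha>: "\<forall>k\<in>{1..K}. \<alpha> k = (\<Sum>n. ratio k (Suc n))"
    and root: "eval_mpoly K S (\<lambda>e. real_of_int (C e)) \<alpha> = 0"
  shows "\<exists>\<^sub>F N in sequentially.
    \<bar>cleared_eval K E S C (\<lambda>k. partial_numer (a k) (b k) N) (\<lambda>k. partial_denom (a k) N)\<bar> < 1"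
proof -
  define Lf where "Lf = (\<Sum>e\<in>S. \<bar>real_of_int (C e)\<bar>) *
    (series_bound ^ (E * K) * (K * (series_bound ^ E * E)))"
  have "Lf \<ge> 0"
    unfolding Lf_def using series_bound_ge_1 by (intro mult_nonneg_nonneg sum_nonneg) auto
  then show ?thesis
  proof (rule frequently_denom_power_tail_lt_1[THEN frequently_elim1])
    fix N assume small: "denom_prod N ^ E * Lf * tail_sum N < 1"
    define x where "x k = (\<Sum>n<N. ratio k (Suc n))" for k
    have TD: "\<forall>k\<in>{1..K}. real_of_int (partial_numer (a k) (b k) N) = real_of_int (partial_denom (a k) N) * x k"
      unfolding x_def ratio_def using a_nonzero by (auto intro: of_int_partial_numer)
    have "\<bar>real_of_int (cleared_eval K E S C (\<lambda>k. partial_numer (a k) (b k) N) (\<lambda>k. partial_denom (a k) N))\<bar> =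
        denom_prod N ^ E *
        \<bar>eval_mpoly K S (\<lambda>e. real_of_int (C e)) x - eval_mpoly K S (\<lambda>e. real_of_int (C e)) \<alpha>\<bar>"
      using of_int_cleared_eval[OF TD E, of C] root by (simp add: denom_prod_def abs_mult power_abs abs_prod)
    also have "\<dots> \<le> denom_prod N ^ E * (Lf * tail_sum N)"
      unfolding Lf_def using denom_prod_pos[of N] partial_series_estimates \<alpha>
      by (intro mult_left_mono abs_eval_mpoly_diff_le[OF series_bound_ge_1 _ E]) (auto simp: x_def)
    also have "\<dots> < 1"
      using small by (simp add: mult.assoc)
    finally show "\<bar>cleared_eval K E S C (\<lambda>k. partial_numer (a k) (b k) N) (\<lambda>k. partial_denom (a k) N)\<bar> < 1"
      by linarith
  qed
qed

end

locale alg_indep_conditions =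
  valuation_conditions K p a b + growth_conditions K \<epsilon> \<kappa> a b s A0
  for K p :: nat and a b :: "nat \<Rightarrow> nat \<Rightarrow> int" and \<epsilon> \<kappa> :: real and s :: "nat \<Rightarrow> int" and A0 :: int
begin

lemma eval_mpoly_int_nonzero:
  fixes C :: "(nat \<Rightarrow> nat) \<Rightarrow> int" and \<alpha> :: "nat \<Rightarrow> real"
  assumes S: "finite S" "S \<noteq> {}" and C: "\<forall>e\<in>S. C e \<noteq> 0"
    and supp: "\<forall>e\<in>S. \<forall>i. i \<notin> {1..K} \<longrightarrow> e i = 0"
    and \<alpha>: "\<forall>k\<in>{1..K}. \<alpha> k = (\<Sum>n. ratio k (Suc n))"
  shows "eval_mpoly K S (\<lambda>e. real_of_int (C e)) \<alpha> \<noteq> 0"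
proof
  assume root: "eval_mpoly K S (\<lambda>e. real_of_int (C e)) \<alpha> = 0"
  obtain E where E: "\<forall>e\<in>S. \<forall>k\<in>{1..K}. e k \<le> E"
    using exponents_bounded[OF S(1)] by blast
  let ?Q = "\<lambda>N. cleared_eval K E S C (\<lambda>k. partial_numer (a k) (b k) N) (\<lambda>k. partial_denom (a k) N)"
  have "\<forall>\<^sub>F N in sequentially. ?Q N \<noteq> 0"
    by (rule eventually_cleared_eval_partial_nonzero[OF S C supp E])
  moreover have "\<exists>\<^sub>F N in sequentially. \<bar>?Q N\<bar> < 1"
    by (rule frequently_abs_cleared_eval_lt_1[OF E \<alpha> root])
  ultimately obtain N where "?Q N \<noteq> 0" "\<bar>?Q N\<bar> < 1"
    by (auto dest: frequently_eventually_conj elim: frequentlyE)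
  then show False
    by linarith
qed

lemma rat_coeffs_zero_if_root:
  fixes c :: "(nat \<Rightarrow> nat) \<Rightarrow> rat" and \<alpha> :: "nat \<Rightarrow> real"
  assumes S: "finite S" and supp: "\<forall>e\<in>S. \<forall>i. i \<notin> {1..K} \<longrightarrow> e i = 0"
    and \<alpha>: "\<forall>k\<in>{1..K}. \<alpha> k = (\<Sum>n. ratio k (Suc n))"
    and root: "eval_mpoly K S (\<lambda>e. of_rat (c e)) \<alpha> = 0" and e: "e \<in> S"
  shows "c e = 0"
proof (rule ccontr)
  assume "c e \<noteq> 0"
  with root e obtain S' C where S': "finite S'" "S' \<subseteq> S" "S' \<noteq> {}" and C: "\<forall>e\<in>S'. C e \<noteq> 0"
    and root': "eval_mpoly K S' (\<lambda>e. of_int (C e)) \<alpha> = 0"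
    by (rule eval_mpoly_int_root_of_rat_root[OF S])
  have "\<forall>e\<in>S'. \<forall>i. i \<notin> {1..K} \<longrightarrow> e i = 0"
    using supp S'(2) by blast
  with root' show False
    using eval_mpoly_int_nonzero[OF S'(1,3) C _ \<alpha>] by blast
qed

end

theorem theorem2:
  fixes K p :: nat and \<epsilon> \<kappa> :: real
    and a b :: "nat \<Rightarrow> nat \<Rightarrow> int"
    and s :: "nat \<Rightarrow> int" and A0 :: int
    and \<alpha> :: "nat \<Rightarrow> real"
  assumes K_pos: "K \<ge> 1"
    and p_prime: "prime p"
    and eps_pos: "\<epsilon> > 0"
    and kappa: "0 < \<kappa>" "\<kappa> < 1"
    and nonzero: "\<forall>k\<in>{1..K}. \<forall>n\<ge>1. a k n \<noteq> 0 \<and> b k n \<noteq> 0"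
    and coprime_p: "\<forall>k\<in>{1..K}. \<forall>n\<ge>1. \<not> int p dvd gcd (a k n) (b k n)"
    and a0: "\<forall>n. a 0 n = 1"
    and unique_max: "\<forall>k\<in>{1..K}. \<forall>\<^sub>F N in sequentially.
          card {n\<in>{1..N}. multiplicity (int p) (a k n) = maxval p (a k) N} = 1"
    and ratio_lim: "\<forall>k\<in>{1..K}.
          filterlim (\<lambda>N. real (maxval p (a k) N) / (1 + real (maxval p (a (k - 1)) N)))
            at_top sequentially"
    and s_pos: "\<forall>n\<ge>1. s n > 0"
    and s_mono: "\<forall>n\<ge>1. s n \<le> s (Suc n)"
    and growth: "\<forall>k\<in>{1..K}. \<forall>A::int. A \<ge> A0 \<longrightarrow> (\<forall>\<^sub>F n in sequentially.
          real n powr (1 + \<epsilon>) \<le> real_of_int (s n) \<and> s n \<le> s (Suc n) \<and>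
          \<bar>real_of_int (b k n)\<bar> \<le> 2 powr (log 2 (real_of_int (s n)) powr \<kappa>) \<and>
          real_of_int (s n) * 2 powr (- (log 2 (real_of_int (s n)) powr \<kappa>))
            \<le> \<bar>real_of_int (a k n)\<bar> \<and>
          \<bar>real_of_int (a k n)\<bar> \<le> max (real_of_int (s n) * 2 powr (log 2 (real_of_int (s n)) powr \<kappa>))
                                       (2 powr (real_of_int A ^ n)))"
    and limsup_inf: "\<forall>A::int. A \<ge> A0 \<longrightarrow>
          limsup (\<lambda>n. ereal (real_of_int (s n) powr (1 / real_of_int A ^ n))) = \<infinity>"
    and alpha_def: "\<forall>k\<in>{1..K}. \<alpha> k = (\<Sum>n. real_of_int (b k (Suc n)) / real_of_int (a k (Suc n)))"
  shows "alg_indep_over_Q K \<alpha>"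
proof -
  have "\<forall>k\<in>{1..K}. \<forall>n\<ge>1. a k n \<noteq> 0"
    using nonzero by blast
  then interpret alg_indep_conditions K p a b \<epsilon> \<kappa> s A0
    using p_prime nonzero coprime_p unique_max ratio_lim K_pos eps_pos kappa s_pos s_mono growth limsup_inf
    by unfold_locales assumption+
  have "\<forall>k\<in>{1..K}. \<alpha> k = (\<Sum>n. ratio k (Suc n))"
    using alpha_def by (simp add: ratio_def)
  then show ?thesis
    unfolding alg_indep_over_Q_def eval_mpoly_def [symmetric] using rat_coeffs_zero_if_root by blast
qed

end
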